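(* Let $d\ge2$, let $\mathbf A,\mathbf B\in\overline{\mathbb Q}[t]$ be nonzero coprime polynomials, $\mathbf c=\mathbf A/\mathbf B$, let $\lambda\in\overline{\mathbb Q}^*$ and let $|\cdot|_v$ be an absolute value on $\overline{\mathbb Q}$. Then for each $n\ge1$, $$M_{n+1,v}(\lambda)\ge\frac{\min\{|\lambda|_v,1\}}{2\max\{|\lambda|_v,1\}}\cdot M_{n,v}(\lambda)^d.$$
   Context: The polynomials $\mathbf A_{\mathbf c,n},\mathbf B_{\mathbf c,n}$ are defined by: $\mathbf A_{\mathbf c,0}=\mathbf A$, $\mathbf B_{\mathbf c,0}=\mathbf B$; if $\mathbf A(0)\neq0$ then $\mathbf A_{\mathbf c,1}=\mathbf A^d+t\mathbf B^d$, $\mathbf B_{\mathbf c,1}=\mathbf A\mathbf B^{d-1}$, while if $\mathbf A(0)=0$ then $\mathbf A_{\mathbf c,1}=(\mathbf A^d+t\mathbf B^d)/t$, $\mathbf B_{\mathbf c,1}=\mathbf A\mathbf B^{d-1}/t$; for $n\ge1$, $\mathbf A_{\mathbf c,n+1}=\mathbf A_{\mathbf c,n}^d+t\mathbf B_{\mathbf c,n}^d$, $\mathbf B_{\mathbf c,n+1}=\mathbf A_{\mathbf c,n}\mathbf B_{\mathbf c,n}^{d-1}$. Then $M_{n,v}(\lambda)=\max\{|\mathbf A_{\mathbf c,n}(\lambda)|_v,|\mathbf B_{\mathbf c,n}(\lambda)|_v\}$. *)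

theory Defs
  imports "HOL-Computational_Algebra.Computational_Algebra"
begin

definition Qbar :: "complex set" where
  "Qbar = {x. algebraic x}"

definition abs_value_on :: "complex set \<Rightarrow> (complex \<Rightarrow> real) \<Rightarrow> bool" where
  "abs_value_on K v \<longleftrightarrow>
     (\<forall>x\<in>K. 0 \<le> v x \<and> (v x = 0 \<longleftrightarrow> x = 0)) \<and>
     (\<forall>x\<in>K. \<forall>y\<in>K. v (x * y) = v x * v y \<and> v (x + y) \<le> v x + v y)"

fun AB_seq :: "nat \<Rightarrow> complex poly \<Rightarrow> complex poly \<Rightarrow> nat \<Rightarrow> complex poly \<times> complex poly" where
  "AB_seq d A B 0 = (A, B)"
| "AB_seq d A B (Suc 0) =
     (if poly A 0 \<noteq> 0 then (A ^ d + [:0, 1:] * B ^ d, A * B ^ (d - 1))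
      else ((A ^ d + [:0, 1:] * B ^ d) div [:0, 1:], (A * B ^ (d - 1)) div [:0, 1:]))"
| "AB_seq d A B (Suc (Suc n)) =
     (let (An, Bn) = AB_seq d A B (Suc n) in (An ^ d + [:0, 1:] * Bn ^ d, An * Bn ^ (d - 1)))"

definition M_nv :: "nat \<Rightarrow> complex poly \<Rightarrow> complex poly \<Rightarrow> nat \<Rightarrow> (complex \<Rightarrow> real) \<Rightarrow> complex \<Rightarrow> real" where
  "M_nv d A B n v lam = max (v (poly (fst (AB_seq d A B n)) lam)) (v (poly (snd (AB_seq d A B n)) lam))"

end

theory Submission
  imports Defs "HOL-Algebra.Algebraic_Closure_Type"
begin

text \<open>
  For \<open>n \<ge> 1\<close> the recursion is the plain one, so with \<open>a = |A_n(\<lambda>)|\<close>,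
  \<open>b = |B_n(\<lambda>)|\<close> and \<open>l = |\<lambda>|\<close> we have
  \<open>M_{n+1} = max |A_n(\<lambda>)^d + \<lambda> B_n(\<lambda>)^d| (a b^(d-1))\<close>, and the reverse triangle
  inequality bounds the first term below by \<open>|a^d - l b^d|\<close>. If \<open>a \<ge> b\<close>, either
  \<open>l b^d \<le> a^d/2\<close> and the first term is at least \<open>a^d/2\<close>, or the second term is at least
  \<open>b^d > a^d/(2l)\<close>. If \<open>b > a\<close>, the second term dominates \<open>a^d\<close>, so one of the two terms
  is at least \<open>l b^d/2\<close>.
\<close>

hide_const (open) UnivPoly.up_ring.coeff

abbreviation complex_ring :: "complex ring" where
  "complex_ring \<equiv> ring_of_type_algebra"

lemma field_complex_ring: "field complex_ring"
  by (rule field_from_type_algebra)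

lemma complex_ring_simps [simp]:
  "carrier complex_ring = UNIV" "mult complex_ring = (*)" "add complex_ring = (+)"
  "one complex_ring = 1" "zero complex_ring = 0"
  by (auto simp: ring_of_type_algebra_def)

lemma complex_ring_nat_pow [simp]: "x [^]\<^bsub>complex_ring\<^esub> (n::nat) = x ^ n"
  by (induct n) (simp_all add: nat_pow_def)

lemma complex_ring_a_inv [simp]: "a_inv complex_ring x = - x"
proof -
  interpret field complex_ring by (rule field_complex_ring)
  have "inv\<^bsub>add_monoid complex_ring\<^esub> x = - x"
    using add.inv_char[of x "- x"] by simp
  then show ?thesis by (simp add: a_inv_def)
qed

lemma complex_ring_m_inv [simp]: "x \<noteq> 0 \<Longrightarrow> m_inv complex_ring x = inverse x"
proof -
  interpret field complex_ring by (rule field_complex_ring)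
  show "x \<noteq> 0 \<Longrightarrow> ?thesis" using inv_char[of x "inverse x"] by simp
qed

text \<open>\<open>ring.eval\<close> reads coefficient lists from the leading coefficient down.\<close>
lemma complex_ring_eval: "ring.eval complex_ring l x = poly (Poly (rev l)) x"
proof -
  interpret field complex_ring by (rule field_complex_ring)
  show ?thesis
  proof (induct l)
    case Nil
    then show ?case by simp
  next
    case (Cons a l)
    have "eval (a # l) x = a * x ^ length l + eval l x" by simp
    also have "\<dots> = poly (Poly (rev l @ [a])) x"
      by (simp add: Poly_append poly_monom Cons)
    finally show ?case by simp
  qed
qed

lemma subfield_Rats_complex_ring: "subfield \<rat> complex_ring"
proof -
  interpret field complex_ring by (rule field_complex_ring)
  show ?thesis by (rule subfieldI'[OF subringI]) auto
qed

lemma algebraic_imp_ring_algebraic: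
  assumes "Polynomial.algebraic x"
  shows "(ring.algebraic complex_ring over \<rat>) x"
proof -
  interpret field complex_ring by (rule field_complex_ring)
  obtain p where p: "\<forall>i. poly.coeff p i \<in> \<rat>" "p \<noteq> 0" "poly p x = 0"
    using assms by (auto simp: algebraic_altdef)
  let ?l = "rev (coeffs p)"
  show ?thesis
  proof (rule algebraicI[of ?l])
    have "set ?l \<subseteq> \<rat>" using p(1) by (auto simp: coeffs_def)
    moreover have "hd ?l \<noteq> 0" using p(2) by (simp add: hd_rev last_coeffs_eq_coeff_degree)
    ultimately show "?l \<in> carrier (univ_poly complex_ring \<rat>)"
      by (simp add: univ_poly_def polynomial_def)
    show "?l \<noteq> []" using p(2) by simp
    show "eval ?l x = \<zero>\<^bsub>complex_ring\<^esub>" using p(3) by (simp add: complex_ring_eval)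
  qed
qed

lemma ring_algebraic_imp_algebraic:
  assumes "(ring.algebraic complex_ring over \<rat>) x"
  shows "Polynomial.algebraic x"
proof -
  interpret field complex_ring by (rule field_complex_ring)
  obtain l where l: "l \<in> carrier (univ_poly complex_ring \<rat>)" "l \<noteq> []" "eval l x = 0"
    using algebraicE[OF subfieldE(1)[OF subfield_Rats_complex_ring] _ assms] by auto
  have l_Rats: "set l \<subseteq> \<rat>" and l_lead: "hd l \<noteq> 0"
    using l(1,2) by (auto simp: univ_poly_def polynomial_def)
  let ?p = "Poly (rev l)"
  show ?thesis
  proof (rule Polynomial.algebraicI')
    show "poly.coeff ?p i \<in> \<rat>" for i
      using l_Rats by (auto simp: nth_default_def) (metis nth_mem set_rev length_rev subsetD)
    have "poly.coeff ?p (length l - 1) = hd l"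
      using l(2) by (simp add: nth_default_def rev_nth hd_conv_nth)
    then show "?p \<noteq> 0" using l_lead by (metis Polynomial.coeff_0)
    show "poly ?p x = 0" using l(3) by (simp add: complex_ring_eval)
  qed
qed

lemma subfield_Qbar: "subfield Qbar complex_ring"
proof -
  interpret field complex_ring by (rule field_complex_ring)
  have "Qbar = {x \<in> carrier complex_ring. (algebraic over \<rat>) x}"
    unfolding Qbar_def using algebraic_imp_ring_algebraic ring_algebraic_imp_algebraic by auto
  then show ?thesis using subfield_of_algebraics[OF subfield_Rats_complex_ring] by simp
qed

lemma Qbar_add: "a \<in> Qbar \<Longrightarrow> b \<in> Qbar \<Longrightarrow> a + b \<in> Qbar"
  and Qbar_mult: "a \<in> Qbar \<Longrightarrow> b \<in> Qbar \<Longrightarrow> a * b \<in> Qbar"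
  and Qbar_uminus: "a \<in> Qbar \<Longrightarrow> - a \<in> Qbar"
  using subringE(5-7)[OF subfieldE(1)[OF subfield_Qbar]] by auto

lemma Qbar_0: "0 \<in> Qbar" and Qbar_1: "1 \<in> Qbar"
  by (auto simp: Qbar_def intro: rat_imp_algebraic)

lemma Qbar_power: "x \<in> Qbar \<Longrightarrow> x ^ n \<in> Qbar"
  by (induct n) (simp_all add: Qbar_1 Qbar_mult)

definition Qbar_poly :: "complex poly \<Rightarrow> bool" where
  "Qbar_poly p \<longleftrightarrow> (\<forall>i. coeff p i \<in> Qbar)"

lemma Qbar_poly_pCons [simp]: "Qbar_poly (pCons a p) \<longleftrightarrow> a \<in> Qbar \<and> Qbar_poly p"
  unfolding Qbar_poly_def by (auto simp: coeff_pCons split: nat.splits)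

lemma Qbar_poly_0 [simp]: "Qbar_poly 0"
  by (simp add: Qbar_poly_def Qbar_0)

lemma Qbar_poly_1: "Qbar_poly 1"
  by (simp add: Qbar_poly_def coeff_1 Qbar_0 Qbar_1)

lemma Qbar_poly_add: "Qbar_poly p \<Longrightarrow> Qbar_poly q \<Longrightarrow> Qbar_poly (p + q)"
  by (simp add: Qbar_poly_def Qbar_add)

lemma Qbar_poly_smult: "a \<in> Qbar \<Longrightarrow> Qbar_poly q \<Longrightarrow> Qbar_poly (Polynomial.smult a q)"
  by (simp add: Qbar_poly_def Qbar_mult)

lemma Qbar_poly_mult: "Qbar_poly p \<Longrightarrow> Qbar_poly q \<Longrightarrow> Qbar_poly (p * q)"
  by (induct p rule: pCons_induct) (simp_all add: Qbar_poly_add Qbar_poly_smult Qbar_0)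

lemma Qbar_poly_power: "Qbar_poly p \<Longrightarrow> Qbar_poly (p ^ n)"
  by (induct n) (simp_all add: Qbar_poly_1 Qbar_poly_mult)

lemma Qbar_poly_div_x:
  assumes "Qbar_poly p"
  shows "Qbar_poly (p div [:0, 1:])"
proof -
  obtain a q where p: "p = pCons a q" by (cases p) auto
  have "p = [:a:] + [:0, 1:] * q" by (simp add: p)
  then have "p div [:0, 1:] = q + [:a:] div [:0, 1:]"
    by (metis add.commute div_mult_self1 mult.commute pCons_eq_0_iff zero_neq_one)
  also have "[:a:] div [:0, 1:] = 0" by (rule div_poly_less) simp
  finally show ?thesis using assms p by simp
qed

lemma poly_in_Qbar: "Qbar_poly p \<Longrightarrow> x \<in> Qbar \<Longrightarrow> poly p x \<in> Qbar"
  by (induct p rule: pCons_induct) (auto simp: Qbar_0 Qbar_add Qbar_mult)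

lemma Qbar_poly_AB_seq:
  assumes "Qbar_poly A" "Qbar_poly B"
  shows "Qbar_poly (fst (AB_seq d A B k)) \<and> Qbar_poly (snd (AB_seq d A B k))"
  using assms
proof (induction d A B k rule: AB_seq.induct)
  case (2 d A B)
  then show ?case
    by (simp add: Qbar_poly_add Qbar_poly_mult Qbar_poly_power Qbar_poly_div_x Qbar_0)
next
  case (3 d A B n)
  then show ?case
    by (auto simp: Qbar_poly_add Qbar_poly_mult Qbar_poly_power Qbar_0 split: prod.splits)
qed simp

lemma abs_value_on_nonneg: "abs_value_on K v \<Longrightarrow> x \<in> K \<Longrightarrow> 0 \<le> v x"
  unfolding abs_value_on_def by blast

lemma abs_value_on_pos: "abs_value_on K v \<Longrightarrow> x \<in> K \<Longrightarrow> x \<noteq> 0 \<Longrightarrow> 0 < v x"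
  unfolding abs_value_on_def by (metis order_le_less)

lemma abs_value_on_mult: "abs_value_on K v \<Longrightarrow> x \<in> K \<Longrightarrow> y \<in> K \<Longrightarrow> v (x * y) = v x * v y"
  unfolding abs_value_on_def by blast

lemma abs_value_on_triangle: "abs_value_on K v \<Longrightarrow> x \<in> K \<Longrightarrow> y \<in> K \<Longrightarrow> v (x + y) \<le> v x + v y"
  unfolding abs_value_on_def by blast

lemma abs_value_on_one:
  assumes "abs_value_on K v" "1 \<in> K"
  shows "v 1 = 1"
proof -
  have "v 1 * (v 1 - 1) = 0"
    using abs_value_on_mult[OF assms(1,2,2)] by (simp add: algebra_simps)
  moreover have "v 1 \<noteq> 0" using abs_value_on_pos[OF assms] by simp
  ultimately show ?thesis by simp
qed

lemma abs_value_on_minus_one: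
  assumes "abs_value_on K v" "1 \<in> K" "- 1 \<in> K"
  shows "v (- 1) = 1"
proof -
  have "(v (- 1) - 1) * (v (- 1) + 1) = 0"
    using abs_value_on_mult[OF assms(1,3,3)] abs_value_on_one[OF assms(1,2)]
    by (simp add: algebra_simps)
  then show ?thesis using abs_value_on_nonneg[OF assms(1,3)] by auto
qed

lemma Qbar_abs_value_uminus: "abs_value_on Qbar v \<Longrightarrow> x \<in> Qbar \<Longrightarrow> v (- x) = v x"
  using abs_value_on_mult[of Qbar v "- 1" x] abs_value_on_minus_one[of Qbar v]
  by (simp add: Qbar_1 Qbar_uminus)

lemma Qbar_abs_value_power: "abs_value_on Qbar v \<Longrightarrow> x \<in> Qbar \<Longrightarrow> v (x ^ n) = v x ^ n"
  by (induct n) (simp_all add: abs_value_on_one abs_value_on_mult Qbar_1 Qbar_power)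

lemma Qbar_abs_value_reverse_triangle:
  assumes v: "abs_value_on Qbar v" and "x \<in> Qbar" "y \<in> Qbar"
  shows "\<bar>v x - v y\<bar> \<le> v (x + y)"
proof -
  have "v x \<le> v (x + y) + v y" if "x \<in> Qbar" "y \<in> Qbar" for x y
    using abs_value_on_triangle[OF v Qbar_add[OF that] Qbar_uminus[OF that(2)]]
      Qbar_abs_value_uminus[OF v that(2)] by simp
  from this[of x y] this[of y x] assms(2,3) show ?thesis by (simp add: add.commute)
qed

lemma scale_factor_bounds:
  fixes l :: real
  assumes "0 < l"
  defines "c \<equiv> min l 1 / (2 * max l 1)"
  shows "c \<le> 1/2" and "c * l \<le> 1/2" and "c \<le> l/2"
proof -
  have "c \<le> 1/2 \<and> c * l \<le> 1/2 \<and> c \<le> l/2"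
  proof (cases "l \<le> 1")
    case True
    then have "c = l/2" by (simp add: c_def)
    moreover have "c * l = l * l / 2" using \<open>c = l/2\<close> by simp
    moreover have "l * l \<le> 1" using True assms(1) by (simp add: mult_le_one)
    ultimately show ?thesis using True by linarith
  next
    case False
    then have c: "c = 1 / (2 * l)" by (simp add: c_def)
    have "1 / (2 * l) \<le> 1/2" "1 / (2 * l) * l = 1/2" using False by (simp_all add: field_simps)
    then show ?thesis using False unfolding c by linarith
  qed
  then show "c \<le> 1/2" "c * l \<le> 1/2" "c \<le> l/2" by simp_all
qed

lemma max_mixed_power_lower_bound:
  fixes a b c l W :: real
  assumes "0 \<le> a" "0 \<le> b" "0 < l" "1 \<le> d"
    and W: "\<bar>a ^ d - l * b ^ d\<bar> \<le> W"
    and c: "c \<le> 1/2" "c * l \<le> 1/2" "c \<le> l/2"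
  shows "c * max a b ^ d \<le> max W (a * b ^ (d - 1))"
proof -
  have split_power: "x ^ d = x * x ^ (d - 1)" for x :: real
    using \<open>1 \<le> d\<close> by (simp add: power_eq_if)
  show ?thesis
  proof (cases "b \<le> a")
    case True
    have "b ^ d \<le> a * b ^ (d - 1)"
      using True \<open>0 \<le> b\<close> by (simp add: split_power mult_right_mono)
    moreover have "c * a ^ d \<le> max W (b ^ d)"
    proof (cases "l * b ^ d \<le> a ^ d / 2")
      case True
      have "c * a ^ d \<le> a ^ d / 2"
        using mult_right_mono[OF c(1) zero_le_power[OF \<open>0 \<le> a\<close>]] by simp
      then show ?thesis using True W by auto
    next
      case False
      have "c * a ^ d = (c * l) * (a ^ d / l)" using \<open>0 < l\<close> by simp
      also have "\<dots> \<le> 1/2 * (a ^ d / l)"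
        using c(2) \<open>0 \<le> a\<close> \<open>0 < l\<close> by (intro mult_right_mono) simp_all
      also have "\<dots> \<le> b ^ d" using False \<open>0 < l\<close> by (simp add: field_simps)
      finally show ?thesis by simp
    qed
    ultimately show ?thesis using True by (simp add: max_def split: if_splits)
  next
    case False
    have "a ^ d \<le> a * b ^ (d - 1)"
      using False \<open>0 \<le> a\<close> by (simp add: split_power mult_left_mono power_mono)
    moreover have "c * b ^ d \<le> l * b ^ d / 2"
      using mult_right_mono[OF c(3) zero_le_power[OF \<open>0 \<le> b\<close>]] by simp
    ultimately show ?thesis using False W by (auto simp: max_def)
  qed
qed

lemma Qbar_abs_value_step_bound:
  assumes v: "abs_value_on Qbar v" and Q: "\<alpha> \<in> Qbar" "\<beta> \<in> Qbar" "lam \<in> Qbar"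
    and "lam \<noteq> 0" "1 \<le> d"
  shows "min (v lam) 1 / (2 * max (v lam) 1) * max (v \<alpha>) (v \<beta>) ^ d
           \<le> max (v (\<alpha> ^ d + lam * \<beta> ^ d)) (v (\<alpha> * \<beta> ^ (d - 1)))"
proof -
  have "v lam > 0" using abs_value_on_pos[OF v Q(3) \<open>lam \<noteq> 0\<close>] .
  have "\<bar>v \<alpha> ^ d - v lam * v \<beta> ^ d\<bar> \<le> v (\<alpha> ^ d + lam * \<beta> ^ d)"
    using Qbar_abs_value_reverse_triangle[OF v Qbar_power[OF Q(1)]
        Qbar_mult[OF Q(3) Qbar_power[OF Q(2)]]]
    by (simp add: Q Qbar_power abs_value_on_mult[OF v] Qbar_abs_value_power[OF v])
  from max_mixed_power_lower_bound[OF _ _ \<open>v lam > 0\<close> \<open>1 \<le> d\<close> this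
      scale_factor_bounds[OF \<open>v lam > 0\<close>]]
  show ?thesis
    by (simp add: Q Qbar_power abs_value_on_nonneg[OF v] abs_value_on_mult[OF v]
        Qbar_abs_value_power[OF v])
qed

lemma AB_seq_Suc:
  assumes "1 \<le> n"
  shows "AB_seq d A B (Suc n) =
           (let (An, Bn) = AB_seq d A B n in (An ^ d + [:0, 1:] * Bn ^ d, An * Bn ^ (d - 1)))"
  using assms by (cases n) auto

theorem lemma5p5:
  fixes d n :: nat and A B :: "complex poly" and lam :: complex and v :: "complex \<Rightarrow> real"
  assumes "d \<ge> 2"
    and "\<forall>i. coeff A i \<in> Qbar" and "\<forall>i. coeff B i \<in> Qbar"
    and "A \<noteq> 0" and "B \<noteq> 0" and "coprime A B"
    and "lam \<in> Qbar" and "lam \<noteq> 0"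
    and "abs_value_on Qbar v"
    and "n \<ge> 1"
  shows "M_nv d A B (n + 1) v lam
           \<ge> min (v lam) 1 / (2 * max (v lam) 1) * (M_nv d A B n v lam) ^ d"
proof -
  obtain An Bn where AB: "AB_seq d A B n = (An, Bn)" by fastforce
  have "Qbar_poly An" "Qbar_poly Bn"
    using Qbar_poly_AB_seq[of A B d n] assms(2,3) AB by (simp_all add: Qbar_poly_def)
  then have "poly An lam \<in> Qbar" "poly Bn lam \<in> Qbar"
    using poly_in_Qbar assms(7) by blast+
  from Qbar_abs_value_step_bound[OF assms(9) this assms(7,8)] assms(1)
  show ?thesis
    using assms(10) by (simp add: M_nv_def AB_seq_Suc AB)
qed

end
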